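(* Let $Z_1,Z_2,Z_3$ be independent random variables and let $p\ge2$ be an integer. Then $$\mathbf E|Z_1+Z_2+Z_3|^p\le \mathbf E|Z_1|^p+\mathbf E|Z_2|^p+\big(\|Z_1\|_{p-1}+\|Z_2\|_{p-1}+\|Z_3\|_p\big)^p.$$
   Context: $\|Z\|_q:=(\mathbf E|Z|^q)^{1/q}$ denotes the $L^q$ norm. *)

theory Defs
  imports "HOL-Probability.Probability"
begin

definition abs_moment :: "'a measure \<Rightarrow> nat \<Rightarrow> ('a \<Rightarrow> real) \<Rightarrow> ennreal" where
  "abs_moment M q Z = (\<integral>\<^sup>+ x. ennreal (\<bar>Z x\<bar> ^ q) \<partial>M)"

definition Lq_norm :: "'a measure \<Rightarrow> nat \<Rightarrow> ('a \<Rightarrow> real) \<Rightarrow> ennreal" where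
  "Lq_norm M q Z = (if abs_moment M q Z = \<infinity> then \<infinity>
     else ennreal (enn2real (abs_moment M q Z) powr (1 / real q)))"

end

theory Submission
  imports Defs
begin

text \<open>
  Bound |Z_1 + Z_2 + Z_3|^p by (|Z_1| + |Z_2| + |Z_3|)^p and expand trinomially; by independence
  the expectation of each monomial |Z_1|^i |Z_2|^j |Z_3|^k factorises into absolute moments.
  Apart from the two corner terms i = p and j = p, which are kept as E|Z_1|^p and E|Z_2|^p,
  every term involves Z_1 and Z_2 only through moments of order at most p - 1 and Z_3 through
  moments of order at most p. Lyapunov's inequality bounds these by powers of the corresponding
  L^q norms, which leaves a part of the trinomial expansion of
  (\<parallel>Z_1\<parallel>_(p-1) + \<parallel>Z_2\<parallel>_(p-1) + \<parallel>Z_3\<parallel>_p)^p.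
\<close>

text \<open>\<open>trinomial_sum p f\<close> is the sum of \<open>p! / (i! j! k!) * f i j k\<close> over \<open>i + j + k = p\<close>.\<close>

definition trinomial_sum :: "nat \<Rightarrow> (nat \<Rightarrow> nat \<Rightarrow> nat \<Rightarrow> 'a::comm_semiring_1) \<Rightarrow> 'a" where
  "trinomial_sum p f =
     (\<Sum>k\<le>p. \<Sum>i\<le>k. of_nat (p choose k) * of_nat (k choose i) * f i (k - i) (p - k))"

lemma trinomial_expansion:
  fixes a b c :: "'a::comm_semiring_1"
  shows "(a + b + c) ^ p = trinomial_sum p (\<lambda>i j k. a ^ i * b ^ j * c ^ k)"
proof -
  have "(a + b + c) ^ p = (\<Sum>k\<le>p. of_nat (p choose k) * (a + b) ^ k * c ^ (p - k))"
    by (rule binomial_ring)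
  also have "\<dots> = (\<Sum>k\<le>p. of_nat (p choose k) *
      (\<Sum>i\<le>k. of_nat (k choose i) * a ^ i * b ^ (k - i)) * c ^ (p - k))"
    by (simp add: binomial_ring)
  finally show ?thesis
    by (simp add: trinomial_sum_def sum_distrib_left sum_distrib_right ac_simps)
qed

lemma trinomial_sum_mono:
  fixes f g :: "nat \<Rightarrow> nat \<Rightarrow> nat \<Rightarrow> 'a::linordered_nonzero_semiring"
  shows "(\<And>i j k. i + j + k = p \<Longrightarrow> f i j k \<le> g i j k) \<Longrightarrow> trinomial_sum p f \<le> trinomial_sum p g"
  unfolding trinomial_sum_def
  by (intro sum_mono mult_left_mono) auto

lemma nn_integral_trinomial_sum:
  assumes "\<And>i j k. f i j k \<in> borel_measurable M"
  shows "(\<integral>\<^sup>+ x. trinomial_sum p (\<lambda>i j k. f i j k x) \<partial>M)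
       = trinomial_sum p (\<lambda>i j k. \<integral>\<^sup>+ x. f i j k x \<partial>M)"
  using assms by (simp add: trinomial_sum_def nn_integral_sum nn_integral_cmult)

lemma trinomial_sum_corner:
  "trinomial_sum p (\<lambda>i j k. if i = p then x else 0) = x"
  "trinomial_sum p (\<lambda>i j k. if j = p then x else 0) = x"
proof -
  have "(\<Sum>i\<le>k. of_nat (p choose k) * of_nat (k choose i) * (if i = p then x else 0))
      = (if k = p then x else 0)" if "k \<le> p" for k
    using that by (auto simp: if_distrib[of "\<lambda>y. _ * y"] cong: if_cong intro!: sum.neutral)
  then show "trinomial_sum p (\<lambda>i j k. if i = p then x else 0) = x"
    by (simp add: trinomial_sum_def)
  have "(\<Sum>i\<le>k. of_nat (p choose k) * of_nat (k choose i) * (if k - i = p then x else 0))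
      = (if k = p then x else 0)" if "k \<le> p" for k
  proof -
    have "(\<Sum>i\<le>k. of_nat (p choose k) * of_nat (k choose i) * (if k - i = p then x else 0))
        = (\<Sum>i\<le>k. if k = p \<and> i = 0 then x else 0)"
      using that by (intro sum.cong) auto
    then show ?thesis by (simp add: sum.delta)
  qed
  then show "trinomial_sum p (\<lambda>i j k. if j = p then x else 0) = x"
    by (simp add: trinomial_sum_def)
qed

lemma trinomial_sum_le_corners:
  fixes m0 m1 m2 :: "nat \<Rightarrow> ennreal" and a b c :: ennreal
  assumes p: "p \<ge> 1" and "m0 0 = 1" "m1 0 = 1" "m2 0 = 1"
    and "\<And>n. n < p \<Longrightarrow> m0 n \<le> a ^ n"
    and "\<And>n. n < p \<Longrightarrow> m1 n \<le> b ^ n"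
    and "\<And>n. n \<le> p \<Longrightarrow> m2 n \<le> c ^ n"
  shows "trinomial_sum p (\<lambda>i j k. m0 i * m1 j * m2 k) \<le> m0 p + m1 p + (a + b + c) ^ p"
proof -
  define bound where "bound i j k =
      (if i = p then m0 p else 0) + (if j = p then m1 p else 0) + a ^ i * b ^ j * c ^ k" for i j k
  have "trinomial_sum p (\<lambda>i j k. m0 i * m1 j * m2 k) \<le> trinomial_sum p bound"
  proof (rule trinomial_sum_mono)
    fix i j k assume ijk: "i + j + k = p"
    show "m0 i * m1 j * m2 k \<le> bound i j k"
    proof (cases "i = p \<or> j = p")
      case True
      then show ?thesis using ijk p assms(2-4) by (auto simp: bound_def)
    next
      case False
      then have "m0 i * m1 j * m2 k \<le> a ^ i * b ^ j * c ^ k"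
        using ijk assms(5-7) by (intro mult_mono) auto
      then show ?thesis using False by (simp add: bound_def)
    qed
  qed
  also have "\<dots> = trinomial_sum p (\<lambda>i j k. if i = p then m0 p else 0)
      + trinomial_sum p (\<lambda>i j k. if j = p then m1 p else 0) + (a + b + c) ^ p"
    by (simp add: bound_def trinomial_sum_def trinomial_expansion sum.distrib distrib_left)
  finally show ?thesis by (simp only: trinomial_sum_corner)
qed

lemma power_le_Young:
  fixes u :: real
  assumes "u \<ge> 0" "0 < i" "i \<le> q"
  shows "u ^ i \<le> real i / real q * u ^ q + (1 - real i / real q)"
proof (cases "u = 0")
  case True
  have "real i / real q \<le> 1" using assms by simp
  then show ?thesis using True assms by (simp add: zero_power)
next
  case False
  then have "(u ^ q) powr (real i / real q) * 1 powr (1 - real i / real q)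
      \<le> real i / real q * u ^ q + (1 - real i / real q) * 1"
    using assms by (intro Youngs_inequality_0) auto
  moreover have "(u ^ q) powr (real i / real q) = u ^ i"
    using assms False by (simp add: powr_realpow[symmetric] powr_powr)
  ultimately show ?thesis by simp
qed

lemma abs_moment_0:
  assumes "prob_space M"
  shows "abs_moment M 0 Z = 1"
  using prob_space.emeasure_space_1[OF assms] by (simp add: abs_moment_def)

lemma abs_moment_eq_0_iff:
  assumes "Z \<in> borel_measurable M" "q > 0"
  shows "abs_moment M q Z = 0 \<longleftrightarrow> (AE x in M. Z x = 0)"
  using assms by (simp add: abs_moment_def nn_integral_0_iff_AE)

lemma abs_moment_le_Lq_norm_power:
  assumes "prob_space M" "Z \<in> borel_measurable M" "i \<le> q" "q > 0"
  shows "abs_moment M i Z \<le> Lq_norm M q Z ^ i"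
proof -
  interpret prob_space M by fact
  consider "i = 0" | "i > 0" "abs_moment M q Z = \<infinity>" | "i > 0" "abs_moment M q Z = 0"
    | r where "i > 0" "abs_moment M q Z = ennreal r" "r > 0"
  proof (cases "i = 0")
    case False
    then show thesis
    proof (cases "abs_moment M q Z" rule: ennreal_cases)
      case (real r)
      then show thesis using False that(3,4) by (cases "r = 0") auto
    qed (use that(2) in simp)
  qed (rule that(1))
  then show ?thesis
  proof cases
    case 1
    then show ?thesis by (simp add: abs_moment_0[OF prob_space_axioms])
  next
    case 2
    then show ?thesis by (simp add: Lq_norm_def)
  next
    case 3
    then have "abs_moment M i Z = 0" using assms by (simp add: abs_moment_eq_0_iff)
    then show ?thesis by simp
  next
    case 4
    \<comment> \<open>Young's inequality at the scale \<open>s = \<parallel>Z\<parallel>_q\<close> integrates to exactly \<open>s ^ i\<close>.\<close>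
    define s where "s = r powr (1 / real q)"
    have s: "s > 0" "s ^ q = r"
      using 4 assms by (simp_all add: s_def powr_realpow[symmetric] powr_powr)
    define c1 c2 where "c1 = real i / real q * s ^ i / s ^ q" and "c2 = (1 - real i / real q) * s ^ i"
    have c: "c1 \<ge> 0" "c2 \<ge> 0"
      using s 4 assms by (simp_all add: c1_def c2_def)
    have "ennreal (\<bar>Z x\<bar> ^ i) \<le> ennreal c1 * ennreal (\<bar>Z x\<bar> ^ q) + ennreal c2" for x
    proof -
      have "(\<bar>Z x\<bar> / s) ^ i \<le> real i / real q * (\<bar>Z x\<bar> / s) ^ q + (1 - real i / real q)"
        using s 4 assms by (intro power_le_Young) auto
      from mult_right_mono[OF this, of "s ^ i"]
      have "\<bar>Z x\<bar> ^ i \<le> c1 * \<bar>Z x\<bar> ^ q + c2"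
        using s by (simp add: c1_def c2_def power_divide distrib_right) (simp add: ac_simps)
      moreover have "ennreal c1 * ennreal (\<bar>Z x\<bar> ^ q) + ennreal c2 = ennreal (c1 * \<bar>Z x\<bar> ^ q + c2)"
        using c by (simp add: ennreal_mult')
      ultimately show ?thesis by (simp add: ennreal_leI)
    qed
    then have "abs_moment M i Z \<le> (\<integral>\<^sup>+ x. ennreal c1 * ennreal (\<bar>Z x\<bar> ^ q) + ennreal c2 \<partial>M)"
      unfolding abs_moment_def by (intro nn_integral_mono)
    also have "\<dots> = ennreal c1 * ennreal r + ennreal c2"
      using assms 4 by (simp add: nn_integral_add nn_integral_cmult abs_moment_def emeasure_space_1)
    also have "\<dots> = ennreal (c1 * r + c2)"
      using c 4 by (simp add: ennreal_mult')
    also have "c1 * r + c2 = s ^ i"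
      using s(1) by (simp add: c1_def c2_def flip: s(2)) (simp add: algebra_simps)
    also have "ennreal (s ^ i) = Lq_norm M q Z ^ i"
      using 4 s by (simp add: Lq_norm_def s_def ennreal_power)
    finally show ?thesis .
  qed
qed

lemma ennreal_abs_add3_power_le:
  fixes a b c :: real
  shows "ennreal (\<bar>a + b + c\<bar> ^ p)
    \<le> trinomial_sum p (\<lambda>i j k. ennreal (\<bar>a\<bar> ^ i) * ennreal (\<bar>b\<bar> ^ j) * ennreal (\<bar>c\<bar> ^ k))"
proof -
  have "\<bar>a + b + c\<bar> ^ p \<le> (\<bar>a\<bar> + \<bar>b\<bar> + \<bar>c\<bar>) ^ p"
    by (intro power_mono) auto
  then have "ennreal (\<bar>a + b + c\<bar> ^ p) \<le> (ennreal \<bar>a\<bar> + ennreal \<bar>b\<bar> + ennreal \<bar>c\<bar>) ^ p"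
    by (simp add: ennreal_power ennreal_leI flip: ennreal_plus)
  then show ?thesis
    by (simp add: trinomial_expansion ennreal_power)
qed

lemma (in prob_space) indep_vars_nn_integral_prod_abs_power:
  assumes "indep_vars (\<lambda>_. borel) Z I" "finite I"
  shows "(\<integral>\<^sup>+ x. (\<Prod>n\<in>I. ennreal (\<bar>Z n x\<bar> ^ e n)) \<partial>M) = (\<Prod>n\<in>I. abs_moment M (e n) (Z n))"
  unfolding abs_moment_def
  by (rule indep_vars_nn_integral[OF assms(2) indep_vars_compose2[OF assms(1)]]) auto

lemma (in prob_space) abs_moment_add3_le_trinomial_sum:
  fixes Z :: "nat \<Rightarrow> 'a \<Rightarrow> real"
  assumes indep: "indep_vars (\<lambda>_. borel) Z {0, 1, 2}"
  shows "abs_moment M p (\<lambda>x. Z 0 x + Z 1 x + Z 2 x)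
    \<le> trinomial_sum p (\<lambda>i j k. abs_moment M i (Z 0) * abs_moment M j (Z 1) * abs_moment M k (Z 2))"
proof -
  define T where "T i j k x = ennreal (\<bar>Z 0 x\<bar> ^ i) * ennreal (\<bar>Z 1 x\<bar> ^ j) * ennreal (\<bar>Z 2 x\<bar> ^ k)"
    for i j k x
  have "Z n \<in> borel_measurable M" if "n \<in> {0, 1, 2}" for n
    using indep that by (auto simp: indep_vars_def)
  then have T_measurable: "T i j k \<in> borel_measurable M" for i j k
    unfolding T_def by measurable
  have "(\<integral>\<^sup>+ x. T i j k x \<partial>M) = abs_moment M i (Z 0) * abs_moment M j (Z 1) * abs_moment M k (Z 2)"
    for i j k
    using indep_vars_nn_integral_prod_abs_power[OF indep, of "\<lambda>n. if n = 0 then i else if n = 1 then j else k"]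
    by (simp add: T_def mult.assoc)
  moreover have "abs_moment M p (\<lambda>x. Z 0 x + Z 1 x + Z 2 x) \<le> (\<integral>\<^sup>+ x. trinomial_sum p (\<lambda>i j k. T i j k x) \<partial>M)"
    unfolding abs_moment_def T_def by (intro nn_integral_mono ennreal_abs_add3_power_le)
  ultimately show ?thesis
    by (simp add: nn_integral_trinomial_sum T_measurable)
qed

theorem lemma3p2:
  fixes M :: "'a measure" and Z :: "nat \<Rightarrow> 'a \<Rightarrow> real" and p :: nat
  assumes "prob_space M"
    and "prob_space.indep_vars M (\<lambda>_. borel) Z {0, 1, 2}"
    and "p \<ge> 2"
  shows "abs_moment M p (\<lambda>x. Z 0 x + Z 1 x + Z 2 x)
     \<le> abs_moment M p (Z 0) + abs_moment M p (Z 1)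
       + (Lq_norm M (p - 1) (Z 0) + Lq_norm M (p - 1) (Z 1) + Lq_norm M p (Z 2)) ^ p"
proof -
  interpret prob_space M by fact
  have indep: "indep_vars (\<lambda>_. borel) Z {0, 1, 2}" by fact
  have Z_measurable: "Z n \<in> borel_measurable M" if "n \<in> {0, 1, 2}" for n
    using indep that by (auto simp: indep_vars_def)
  note Lyapunov = abs_moment_le_Lq_norm_power[OF prob_space_axioms Z_measurable]
  have "abs_moment M p (\<lambda>x. Z 0 x + Z 1 x + Z 2 x)
      \<le> trinomial_sum p (\<lambda>i j k. abs_moment M i (Z 0) * abs_moment M j (Z 1) * abs_moment M k (Z 2))"
    by (rule abs_moment_add3_le_trinomial_sum[OF indep])
  also have "\<dots> \<le> abs_moment M p (Z 0) + abs_moment M p (Z 1)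
      + (Lq_norm M (p - 1) (Z 0) + Lq_norm M (p - 1) (Z 1) + Lq_norm M p (Z 2)) ^ p"
    using \<open>p \<ge> 2\<close>
    by (intro trinomial_sum_le_corners Lyapunov) (auto simp: abs_moment_0[OF prob_space_axioms])
  finally show ?thesis .
qed

end
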